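(* Let $f:\mathbb{R}^n\times\mathbb{R}^m\to\mathbb{R}^n$ be smooth with $f(0,0)=0$, and suppose $f$ is affine in the input, i.e. $f(x,u)=f_0(x)+g(x)u$ for smooth $f_0:\mathbb{R}^n\to\mathbb{R}^n$ and $g:\mathbb{R}^n\to\mathbb{R}^{n\times m}$. Let $X\subset\mathbb{R}^n$, $U\subset\mathbb{R}^m$, $P\subset\mathbb{R}^n$ be bounded open sets containing the origin, with $U$ convex, and suppose there is $\bar h>0$ such that for every $x_0\in X$ and $u_0\in U$ the initial-value problem $\dot x(t)=f(x(t),u_0)$, $x(0)=x_0$, has a unique solution $\phi(t;x_0,u_0)$ on $0\le t\le \bar h$. Let $Q\in\mathbb{R}^{n\times n}$ be positive semidefinite and $R\in\mathbb{R}^{m\times m}$ positive definite. For a sampling period $h\in(0,\bar h]$ define the Hamiltonian $$H(x,u,p^+)=\phi(h;x,u)^{\mathrm T}p^+ + h\,x^{\mathrm T}Qx + h\,u^{\mathrm T}Ru .$$ Then for all sufficiently small $h>0$, the function $u\mapsto H(x,u,p^+)$ is convex on $U$ for every $(x,p^+)\in X\times P$.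
   Context: $\phi(t;x_0,u_0)$ denotes the state at time $t$ of the plant $\dot x=f(x,u)$ started at $x_0$ with the input held constant at $u_0$ (it is smooth in $(t,x_0,u_0)$). This Hamiltonian arises from the sampled-data optimal control problem of minimizing $\sum_{k\ge0}(h x[k]^{\mathrm T}Qx[k]+h u[k]^{\mathrm T}Ru[k])$ subject to $x[k+1]=\phi(h;x[k],u[k])$. *)

theory Defs
  imports "HOL-Analysis.Analysis"
begin

text \<open>Iterated directional (Frechet) derivatives: dderiv [v1,...,vk] f x = D^k f(x)(v1,...,vk).\<close>
fun dderiv :: "'a::real_normed_vector list \<Rightarrow> ('a \<Rightarrow> 'b::real_normed_vector) \<Rightarrow> 'a \<Rightarrow> 'b" where
  "dderiv [] f = f"
| "dderiv (v # vs) f = (\<lambda>x. frechet_derivative (dderiv vs f) (at x) v)"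

text \<open>C-infinity on an open set: all iterated derivatives exist (Frechet differentiable) on S.
  Continuity of every derivative follows from differentiability of the next one.\<close>
definition smooth_on :: "'a::real_normed_vector set \<Rightarrow> ('a \<Rightarrow> 'b::real_normed_vector) \<Rightarrow> bool" where
  "smooth_on S f \<longleftrightarrow> open S \<and> (\<forall>vs. \<forall>x\<in>S. dderiv vs f differentiable (at x))"

definition psd_matrix :: "real^'n^'n \<Rightarrow> bool" where
  "psd_matrix Q \<longleftrightarrow> transpose Q = Q \<and> (\<forall>x. 0 \<le> x \<bullet> (Q *v x))"

definition pd_matrix :: "real^'n^'n \<Rightarrow> bool" where
  "pd_matrix R \<longleftrightarrow> transpose R = R \<and> (\<forall>x. x \<noteq> 0 \<longrightarrow> 0 < x \<bullet> (R *v x))"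

definition hamiltonian ::
  "(real \<Rightarrow> real^'n \<Rightarrow> real^'m \<Rightarrow> real^'n) \<Rightarrow> real^'n^'n \<Rightarrow> real^'m^'m \<Rightarrow> real
    \<Rightarrow> real^'n \<Rightarrow> real^'m \<Rightarrow> real^'n \<Rightarrow> real" where
  "hamiltonian phi Q R h x u p = phi h x u \<bullet> p + h * (x \<bullet> (Q *v x)) + h * (u \<bullet> (R *v u))"

end

theory Submission
  imports Defs
begin

(* Write u_t = (1 - t) u + t v. The state cost does not depend on u, and the input cost is
   strongly convex, so the convexity defect of H in u is
     Delta . p+  -  h t (1 - t) (u - v)^T R (u - v),
   where Delta = phi(h; x, u_t) - ((1 - t) phi(h; x, u) + t phi(h; x, v)).
   Since f is affine in u, Delta solves an ODE forced by the interpolation defect of f along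
   the three trajectories. The trajectories for u and v differ by O(h |u - v|), so Gronwall's
   inequality on the short horizon [0, h] gives |Delta| = O(t (1 - t) h^2 |u - v|^2), which the
   input cost of order h t (1 - t) |u - v|^2 dominates for small h. The constants come from
   C^2 bounds of f0 and g on a ball that contains all trajectories from X for small h. *)

lemma norm_matrix_vector_mult_le:
  fixes A :: "real^'m^'n"
  shows "norm (A *v x) \<le> norm A * norm x"
proof -
  have "norm (A *v x) = L2_set (\<lambda>i. \<bar>A $ i \<bullet> x\<bar>) UNIV"
    by (simp add: norm_vec_def matrix_mult_dot)
  also have "\<dots> \<le> L2_set (\<lambda>i. norm (A $ i) * norm x) UNIV"
    by (rule L2_set_mono) (simp_all add: Cauchy_Schwarz_ineq2)
  also have "\<dots> = norm A * norm x"
    by (simp add: L2_set_left_distrib norm_vec_def)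
  finally show ?thesis .
qed

lemma norm_matrix_vector_mult_bound:
  fixes A :: "real^'m^'n"
  assumes "norm A \<le> a" "norm x \<le> b"
  shows "norm (A *v x) \<le> a * b"
  using norm_matrix_vector_mult_le[of A x] mult_mono[OF assms] order_trans[OF norm_ge_zero assms(1)]
  by simp

lemma pd_matrix_coercive:
  fixes R :: "real^'m^'m"
  assumes "pd_matrix R"
  obtains l where "l > 0" "\<And>z. l * (norm z)^2 \<le> z \<bullet> (R *v z)"
proof -
  have "continuous_on (sphere 0 1) (\<lambda>z::real^'m. z \<bullet> (R *v z))"
    by (intro continuous_intros linear_continuous_on matrix_vector_mul_bounded_linear)
  moreover have "sphere (0::real^'m) 1 \<noteq> {}"
    by simp
  ultimately obtain z0 where z0: "z0 \<in> sphere 0 1"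
    and min: "\<And>z. z \<in> sphere 0 1 \<Longrightarrow> z0 \<bullet> (R *v z0) \<le> z \<bullet> (R *v z)"
    using continuous_attains_inf[OF compact_sphere] by blast
  show ?thesis
  proof
    show "0 < z0 \<bullet> (R *v z0)"
      using assms z0 unfolding pd_matrix_def by (metis norm_zero mem_sphere_0 zero_neq_one)
    fix z :: "real^'m"
    show "z0 \<bullet> (R *v z0) * (norm z)^2 \<le> z \<bullet> (R *v z)"
    proof (cases "z = 0")
      case False
      then have "z0 \<bullet> (R *v z0) \<le> (z /\<^sub>R norm z) \<bullet> (R *v (z /\<^sub>R norm z))"
        by (intro min) simp
      also have "\<dots> = (z \<bullet> (R *v z)) / (norm z)^2"
        by (simp add: matrix_vector_mult_scaleR power2_eq_square divide_inverse)
      finally show ?thesis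
        using False by (simp add: field_simps)
    qed simp
  qed
qed

lemma quadratic_form_convex_combination:
  fixes R :: "real^'m^'m"
  shows "((1 - t) *\<^sub>R u + t *\<^sub>R v) \<bullet> (R *v ((1 - t) *\<^sub>R u + t *\<^sub>R v))
    = (1 - t) * (u \<bullet> (R *v u)) + t * (v \<bullet> (R *v v)) - t * (1 - t) * ((u - v) \<bullet> (R *v (u - v)))"
  by (simp add: matrix_vector_right_distrib matrix_vector_mult_diff_distrib matrix_vector_mult_scaleR
      inner_add_left inner_add_right inner_diff_left inner_diff_right algebra_simps power2_eq_square)

text \<open>The bounds a \<open>C\<^sup>2\<close> function satisfies on a compact convex set; the defect of linear
  interpolation stands in for the second derivative.\<close>
definition C2_bounds_on :: "real \<Rightarrow> 'a::real_normed_vector set \<Rightarrow> ('a \<Rightarrow> 'b::real_normed_vector) \<Rightarrow> bool"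
  where "C2_bounds_on L K F \<longleftrightarrow>
    (\<forall>a\<in>K. norm (F a) \<le> L) \<and> L-lipschitz_on K F \<and>
    (\<forall>a\<in>K. \<forall>b\<in>K. \<forall>t\<in>{0..1}.
      norm (F ((1 - t) *\<^sub>R a + t *\<^sub>R b) - ((1 - t) *\<^sub>R F a + t *\<^sub>R F b))
        \<le> L * t * (1 - t) * (norm (b - a))\<^sup>2)"

lemma C2_bounds_on_nonneg: "C2_bounds_on L K F \<Longrightarrow> 0 \<le> L"
  by (auto simp: C2_bounds_on_def intro: lipschitz_on_nonneg)

lemma C2_bounds_on_norm_le: "C2_bounds_on L K F \<Longrightarrow> a \<in> K \<Longrightarrow> norm (F a) \<le> L"
  by (simp add: C2_bounds_on_def)

lemma C2_bounds_on_lipschitz: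
  "C2_bounds_on L K F \<Longrightarrow> a \<in> K \<Longrightarrow> b \<in> K \<Longrightarrow> norm (F a - F b) \<le> L * norm (a - b)"
  by (auto simp: C2_bounds_on_def intro: lipschitz_on_normD)

lemma C2_bounds_on_interpolation_defect:
  "C2_bounds_on L K F \<Longrightarrow> a \<in> K \<Longrightarrow> b \<in> K \<Longrightarrow> t \<in> {0..1} \<Longrightarrow>
    norm (F ((1 - t) *\<^sub>R a + t *\<^sub>R b) - ((1 - t) *\<^sub>R F a + t *\<^sub>R F b)) \<le> L * t * (1 - t) * (norm (b - a))\<^sup>2"
  by (simp add: C2_bounds_on_def)

lemma vector_differentiable_bound:
  fixes f :: "real \<Rightarrow> 'a::real_normed_vector"
  assumes "convex S"
    and "\<And>s. s \<in> S \<Longrightarrow> (f has_vector_derivative f' s) (at s within S)"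
    and "\<And>s. s \<in> S \<Longrightarrow> norm (f' s) \<le> B"
    and "x \<in> S" "y \<in> S"
  shows "norm (f x - f y) \<le> B * \<bar>x - y\<bar>"
proof -
  have "norm (f x - f y) \<le> B * norm (x - y)"
  proof (rule differentiable_bound[OF \<open>convex S\<close> _ _ \<open>x \<in> S\<close> \<open>y \<in> S\<close>])
    show "(f has_derivative (\<lambda>r. r *\<^sub>R f' s)) (at s within S)" if "s \<in> S" for s
      using assms(2)[OF that] by (simp add: has_vector_derivative_def)
    show "onorm (\<lambda>r. r *\<^sub>R f' s) \<le> B" if "s \<in> S" for s
      using assms(3)[OF that]
      by (intro onorm_le) (metis abs_ge_zero mult.commute mult_left_mono norm_scaleR real_norm_def)
  qed
  then show ?thesis
    by simp
qed

lemma C1_imp_lipschitz_on_compact_convex: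
  fixes G :: "'a::euclidean_space \<Rightarrow> 'b::real_normed_vector"
  assumes diff: "\<And>x. G differentiable (at x)"
    and cont: "\<And>w. continuous_on K (\<lambda>x. frechet_derivative G (at x) w)"
    and K: "compact K" "convex K"
  obtains L where "L-lipschitz_on K G"
proof -
  have "\<exists>M>0. \<forall>x\<in>K. norm (frechet_derivative G (at x) b) \<le> M" for b
    using compact_imp_bounded[OF compact_continuous_image[OF cont K(1)]]
    by (auto simp: bounded_pos)
  then obtain M where M_pos: "\<And>b. M b > 0"
    and M: "\<And>b x. x \<in> K \<Longrightarrow> norm (frechet_derivative G (at x) b) \<le> M b"
    by metis
  have "dist (G x) (G y) \<le> (\<Sum>b\<in>Basis. M b) * dist x y" if "x \<in> K" "y \<in> K" for x y
    unfolding dist_norm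
  proof (rule differentiable_bound[OF K(2) _ _ that])
    fix z assume "z \<in> K"
    show "(G has_derivative frechet_derivative G (at z)) (at z within K)"
      using diff frechet_derivative_works has_derivative_at_withinI by blast
    have "onorm (frechet_derivative G (at z)) \<le> (\<Sum>b\<in>Basis. norm (frechet_derivative G (at z) b))"
      using diff has_derivative_bounded_linear frechet_derivative_works
      by (blast intro: onorm_componentwise)
    also have "\<dots> \<le> (\<Sum>b\<in>Basis. M b)"
      using M[OF \<open>z \<in> K\<close>] by (rule sum_mono)
    finally show "onorm (frechet_derivative G (at z)) \<le> (\<Sum>b\<in>Basis. M b)" .
  qed
  moreover have "0 \<le> (\<Sum>b\<in>Basis. M b)"
    using M_pos by (simp add: less_imp_le sum_nonneg)
  ultimately show ?thesis
    using that lipschitz_onI by blast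
qed

lemma interpolation_defect_le:
  fixes F :: "'a::real_normed_vector \<Rightarrow> 'b::real_normed_vector"
  assumes der: "\<And>x. (F has_derivative DF x) (at x)"
    and lip: "\<And>p q v. p \<in> K \<Longrightarrow> q \<in> K \<Longrightarrow> norm (DF p v - DF q v) \<le> L * norm (p - q) * norm v"
    and "0 \<le> L" "convex K" "a \<in> K" "b \<in> K" "t \<in> {0..1}"
  shows "norm (F ((1 - t) *\<^sub>R a + t *\<^sub>R b) - ((1 - t) *\<^sub>R F a + t *\<^sub>R F b))
    \<le> L * t * (1 - t) * (norm (b - a))\<^sup>2"
proof -
  define p where "p s = (1 - s) *\<^sub>R a + s *\<^sub>R b" for s
  have p_in: "p s \<in> K" if "s \<in> {0..1}" for s
    using assms(4-6) that by (simp add: p_def convexD)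
  have p_diff: "p s - p s' = (s - s') *\<^sub>R (b - a)" for s s'
    by (simp add: p_def algebra_simps)
  have deriv: "((\<lambda>s. F (p s)) has_vector_derivative DF (p s) (b - a)) (at s within S)" for s S
  proof -
    have "(p has_derivative (\<lambda>r. r *\<^sub>R (b - a))) (at s within S)"
      unfolding p_def by (auto intro!: derivative_eq_intros simp: algebra_simps)
    from has_derivative_compose[OF this der[THEN has_derivative_at_withinI]]
    show ?thesis
      using linear_scale[OF has_derivative_linear[OF der]]
      by (simp add: has_vector_derivative_def o_def)
  qed
  have taylor: "norm (F (p \<sigma>) - F (p t) - (\<sigma> - t) *\<^sub>R DF (p t) (b - a))
      \<le> L * (\<sigma> - t)\<^sup>2 * (norm (b - a))\<^sup>2" if "\<sigma> \<in> {0..1}" for \<sigma>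
  proof -
    have seg: "closed_segment t \<sigma> \<subseteq> {0..1}"
      using that assms(7) by (auto simp: closed_segment_eq_real_ivl)
    have "norm (F (p \<sigma>) - F (p t) - (\<sigma> - t) *\<^sub>R DF (p t) (b - a))
        \<le> norm (\<sigma> - t) * (L * \<bar>\<sigma> - t\<bar> * (norm (b - a))\<^sup>2)"
    proof (rule vector_differentiable_bound_linearization)
      fix s assume s: "s \<in> closed_segment t \<sigma>"
      have "norm (DF (p s) (b - a) - DF (p t) (b - a)) \<le> L * \<bar>s - t\<bar> * (norm (b - a))\<^sup>2"
        using lip[OF p_in p_in, of s t "b - a"] seg s assms(7)
        by (auto simp: p_diff power2_eq_square mult.assoc)
      also have "\<dots> \<le> L * \<bar>\<sigma> - t\<bar> * (norm (b - a))\<^sup>2"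
        using s \<open>0 \<le> L\<close> by (intro mult_right_mono mult_left_mono)
          (auto simp: closed_segment_eq_real_ivl split: if_splits)
      finally show "norm (DF (p s) (b - a) - DF (p t) (b - a)) \<le> L * \<bar>\<sigma> - t\<bar> * (norm (b - a))\<^sup>2" .
    qed (auto intro: deriv)
    then show ?thesis
      by (simp add: power2_eq_square mult_ac)
  qed
  have "F (p t) - ((1 - t) *\<^sub>R F a + t *\<^sub>R F b)
      = - ((1 - t) *\<^sub>R (F (p 0) - F (p t) - (0 - t) *\<^sub>R DF (p t) (b - a))
           + t *\<^sub>R (F (p 1) - F (p t) - (1 - t) *\<^sub>R DF (p t) (b - a)))"
    by (simp add: p_def algebra_simps)
  also have "norm \<dots> \<le> (1 - t) * (L * t\<^sup>2 * (norm (b - a))\<^sup>2) + t * (L * (1 - t)\<^sup>2 * (norm (b - a))\<^sup>2)"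
    unfolding norm_minus_cancel
    using taylor[of 0] taylor[of 1] assms(7)
    by (intro norm_triangle_le add_mono) (auto intro: mult_left_mono)
  also have "\<dots> = L * t * (1 - t) * (norm (b - a))\<^sup>2"
    by (simp add: power2_eq_square algebra_simps)
  finally show ?thesis
    by (simp add: p_def)
qed

lemma smooth_on_UNIV_frechet_derivative_lipschitz:
  fixes F :: "'a::euclidean_space \<Rightarrow> 'b::real_normed_vector"
  assumes smooth: "smooth_on UNIV F" and K: "compact K" "convex K"
  obtains L where "0 \<le> L" "\<And>p q v. p \<in> K \<Longrightarrow> q \<in> K \<Longrightarrow>
    norm (frechet_derivative F (at p) v - frechet_derivative F (at q) v) \<le> L * norm (p - q) * norm v"
proof -
  let ?DF = "\<lambda>x. frechet_derivative F (at x)"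
  have diff: "dderiv vs F differentiable (at x)" for vs x
    using smooth by (simp add: smooth_on_def)
  have "\<exists>L. L-lipschitz_on K (\<lambda>x. ?DF x b)" for b
  proof -
    have "(\<lambda>x. ?DF x b) differentiable (at x)"
      "continuous_on K (\<lambda>x. frechet_derivative (\<lambda>x. ?DF x b) (at x) w)" for x w
      using diff[of "[b]"] diff[of "[w, b]"]
      by (auto intro: continuous_at_imp_continuous_on differentiable_imp_continuous_within)
    then show ?thesis
      using C1_imp_lipschitz_on_compact_convex K by blast
  qed
  then obtain Lb where Lb: "\<And>b. (Lb b)-lipschitz_on K (\<lambda>x. ?DF x b)"
    by metis
  show ?thesis
  proof
    show "0 \<le> (\<Sum>b\<in>Basis. Lb b)"
      using Lb lipschitz_on_nonneg by (metis sum_nonneg)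
    fix p q v assume "p \<in> K" "q \<in> K"
    have lin: "bounded_linear (\<lambda>v. ?DF p v - ?DF q v)"
      using diff[of "[]"] by (auto intro: bounded_linear_sub frechet_derivative_works[THEN iffD1]
          has_derivative_bounded_linear)
    have "norm (?DF p v - ?DF q v) \<le> onorm (\<lambda>v. ?DF p v - ?DF q v) * norm v"
      using lin by (rule onorm)
    also have "\<dots> \<le> (\<Sum>b\<in>Basis. norm (?DF p b - ?DF q b)) * norm v"
      using lin by (intro mult_right_mono onorm_componentwise) simp_all
    also have "\<dots> \<le> (\<Sum>b\<in>Basis. Lb b * norm (p - q)) * norm v"
      using Lb \<open>p \<in> K\<close> \<open>q \<in> K\<close> by (intro mult_right_mono sum_mono lipschitz_on_normD) auto
    finally show "norm (?DF p v - ?DF q v) \<le> (\<Sum>b\<in>Basis. Lb b) * norm (p - q) * norm v"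
      by (simp add: sum_distrib_right)
  qed
qed

lemma smooth_on_UNIV_imp_C2_bounds_on:
  fixes F :: "'a::euclidean_space \<Rightarrow> 'b::real_normed_vector"
  assumes smooth: "smooth_on UNIV F" and K: "compact K" "convex K"
  obtains L where "C2_bounds_on L K F"
proof -
  let ?DF = "\<lambda>x. frechet_derivative F (at x)"
  have diff: "dderiv vs F differentiable (at x)" for vs x
    using smooth by (simp add: smooth_on_def)
  have "F differentiable (at x)" "continuous_on K (\<lambda>x. ?DF x w)" for x w
    using diff[of "[]"] diff[of "[w]"]
    by (auto intro: continuous_at_imp_continuous_on differentiable_imp_continuous_within)
  then obtain L1 where L1: "L1-lipschitz_on K F"
    using C1_imp_lipschitz_on_compact_convex K by blast
  obtain L2 where L2: "0 \<le> L2"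
    "\<And>p q v. p \<in> K \<Longrightarrow> q \<in> K \<Longrightarrow> norm (?DF p v - ?DF q v) \<le> L2 * norm (p - q) * norm v"
    using smooth_on_UNIV_frechet_derivative_lipschitz[OF smooth K] by blast
  obtain M where M: "\<And>a. a \<in> K \<Longrightarrow> norm (F a) \<le> M" "0 \<le> M"
    using compact_imp_bounded[OF compact_continuous_image[OF _ K(1)], of F]
      \<open>\<And>x. F differentiable (at x)\<close>
    by (fastforce simp: bounded_pos intro: less_imp_le continuous_at_imp_continuous_on
        differentiable_imp_continuous_within)
  define L where "L = M + L1 + L2"
  have le_L: "M \<le> L" "L1 \<le> L" "L2 \<le> L"
    using M(2) L2(1) lipschitz_on_nonneg[OF L1] by (auto simp: L_def)
  have "C2_bounds_on L K F"
    unfolding C2_bounds_on_def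
  proof (intro conjI ballI)
    show "norm (F a) \<le> L" if "a \<in> K" for a
      using M(1)[OF that] le_L by simp
    show "L-lipschitz_on K F"
      using lipschitz_on_mono[OF L1 order_refl] le_L by blast
    fix a b and t :: real assume "a \<in> K" "b \<in> K" "t \<in> {0..1}"
    have "norm (?DF p v - ?DF q v) \<le> L * norm (p - q) * norm v" if "p \<in> K" "q \<in> K" for p q v
      using L2(2)[OF that, of v] le_L by (meson mult_right_mono norm_ge_zero order_trans)
    then show "norm (F ((1 - t) *\<^sub>R a + t *\<^sub>R b) - ((1 - t) *\<^sub>R F a + t *\<^sub>R F b))
        \<le> L * t * (1 - t) * (norm (b - a))\<^sup>2"
      using \<open>\<And>x. F differentiable (at x)\<close>
      by (intro interpolation_defect_le[where DF = ?DF])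
        (use L2 le_L K \<open>a \<in> K\<close> \<open>b \<in> K\<close> \<open>t \<in> {0..1}\<close> in \<open>auto simp: frechet_derivative_works\<close>)
  qed
  then show ?thesis ..
qed

lemma short_time_gronwall:
  fixes z :: "real \<Rightarrow> 'a::real_normed_vector"
  assumes der: "\<And>s. s \<in> {0..h} \<Longrightarrow> (z has_vector_derivative z' s) (at s within {0..h})"
    and z0: "z 0 = 0"
    and growth: "\<And>s. s \<in> {0..h} \<Longrightarrow> norm (z' s) \<le> A * norm (z s) + C"
    and A: "0 \<le> A" "A * h \<le> 1/2"
    and s: "s \<in> {0..h}"
  shows "norm (z s) \<le> 2 * h * C"
proof -
  have "continuous_on {0..h} z"
    using der by (meson continuous_on_eq_continuous_within has_vector_derivative_continuous)
  then have "continuous_on {0..h} (\<lambda>s. norm (z s))"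
    by (intro continuous_intros)
  moreover have "{0..h} \<noteq> {}"
    using s by auto
  ultimately obtain s0 where s0: "s0 \<in> {0..h}" and max: "\<And>s. s \<in> {0..h} \<Longrightarrow> norm (z s) \<le> norm (z s0)"
    using continuous_attains_sup[OF compact_Icc] by blast
  define m where "m = norm (z s0)"
  have "m = norm (z s0 - z 0)"
    by (simp add: m_def z0)
  also have "\<dots> \<le> (A * m + C) * \<bar>s0 - 0\<bar>"
  proof (rule vector_differentiable_bound[OF _ der])
    show "norm (z' \<sigma>) \<le> A * m + C" if "\<sigma> \<in> {0..h}" for \<sigma>
      using growth[OF that] mult_left_mono[OF max[OF that] A(1)] by (simp add: m_def)
  qed (use s0 s in auto)
  also have "\<dots> \<le> (A * m + C) * h"
    using s0 order_trans[OF norm_ge_zero growth[OF s0]]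
    by (intro mult_left_mono) (auto simp: m_def)
  also have "\<dots> \<le> m / 2 + C * h"
    using mult_right_mono[OF A(2), of m] by (simp add: m_def algebra_simps)
  finally have "m \<le> 2 * h * C"
    by (simp add: field_simps)
  then show ?thesis
    using max[OF s] by (simp add: m_def)
qed

lemma stays_in_cball_if_derivative_bounded:
  fixes y :: "real \<Rightarrow> 'a::real_inner"
  assumes der: "\<And>s. s \<in> {0..T} \<Longrightarrow> (y has_vector_derivative y' s) (at s within {0..T})"
    and bound: "\<And>s. s \<in> {0..T} \<Longrightarrow> y s \<in> cball (y 0) r \<Longrightarrow> norm (y' s) \<le> M"
    and "0 < r" "M * T < r" and s: "s \<in> {0..T}"
  shows "y s \<in> cball (y 0) r"
proof (rule ccontr)
  assume outside: "y s \<notin> cball (y 0) r"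
  have cont: "continuous_on {0..T} y"
    using der by (meson continuous_on_eq_continuous_within has_vector_derivative_continuous)
  define Z where "Z = {0..T} \<inter> (\<lambda>\<sigma>. dist (y 0) (y \<sigma>)) -` {r..}"
  have "closed Z"
    unfolding Z_def using cont by (intro continuous_closed_preimage continuous_intros) auto
  then have "compact Z"
    by (auto simp: Z_def compact_eq_bounded_closed intro: bounded_Int)
  moreover have "s \<in> Z"
    using s outside by (simp add: Z_def)
  ultimately have "\<exists>s1\<in>Z. \<forall>\<sigma>\<in>Z. s1 \<le> \<sigma>"
    by (intro compact_attains_inf) auto
  then obtain s1 where s1: "s1 \<in> Z" and first: "\<And>\<sigma>. \<sigma> \<in> Z \<Longrightarrow> s1 \<le> \<sigma>"
    by blast
  have s1T: "0 \<le> s1" "s1 \<le> T" and exit: "r \<le> dist (y 0) (y s1)"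
    using s1 by (auto simp: Z_def)
  with \<open>0 < r\<close> have "0 < s1"
    by (cases "s1 = 0") auto
  \<comment> \<open>\<open>s1\<close> is the first exit time; before it the derivative bound applies.\<close>
  have inside: "y \<sigma> \<in> cball (y 0) r" if "0 \<le> \<sigma>" "\<sigma> < s1" for \<sigma>
    using first[of \<sigma>] that s1T by (force simp: Z_def)
  obtain \<xi> where \<xi>: "\<xi> \<in> {0<..<s1}" and mvt: "norm (y s1 - y 0) \<le> norm ((s1 - 0) *\<^sub>R y' \<xi>)"
  proof -
    have "\<exists>\<xi>\<in>{0<..<s1}. norm (y s1 - y 0) \<le> norm ((s1 - 0) *\<^sub>R y' \<xi>)"
    proof (rule mvt_general[OF \<open>0 < s1\<close>])
      show "continuous_on {0..s1} y"
        using cont s1T by (auto intro: continuous_on_subset)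
      fix \<sigma> assume "0 < \<sigma>" "\<sigma> < s1"
      then show "(y has_derivative (\<lambda>r. r *\<^sub>R y' \<sigma>)) (at \<sigma>)"
        using der[of \<sigma>] s1T by (simp add: has_vector_derivative_def at_within_Icc_at)
    qed
    then show ?thesis
      using that by blast
  qed
  have "norm (y' \<xi>) \<le> M"
    using \<xi> s1T inside[of \<xi>] by (intro bound) auto
  have "dist (y 0) (y s1) \<le> s1 * norm (y' \<xi>)"
    using mvt s1T by (simp add: dist_norm norm_minus_commute)
  also have "\<dots> \<le> T * M"
    using s1T \<open>norm (y' \<xi>) \<le> M\<close> by (intro mult_mono) auto
  finally show False
    using exit \<open>M * T < r\<close> by (simp add: mult.commute)
qed

lemma hamiltonian_convex_combination:
  "hamiltonian phi Q R h x ((1 - t) *\<^sub>R u + t *\<^sub>R v) p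
    = (1 - t) * hamiltonian phi Q R h x u p + t * hamiltonian phi Q R h x v p
      + (phi h x ((1 - t) *\<^sub>R u + t *\<^sub>R v) - ((1 - t) *\<^sub>R phi h x u + t *\<^sub>R phi h x v)) \<bullet> p
      - h * (t * (1 - t) * ((u - v) \<bullet> (R *v (u - v))))"
  unfolding hamiltonian_def quadratic_form_convex_combination
  by (simp add: inner_diff_left inner_add_left algebra_simps)

text \<open>\<open>L0 + Lg * rU\<close> bounds \<open>f\<close> on \<open>K \<times> U\<close> and is its Lipschitz constant in the state; the
  horizon condition keeps the trajectories in \<open>K\<close> and makes the Gronwall factor at most 2.\<close>
locale affine_input_flow =
  fixes f :: "real^'n \<Rightarrow> real^'m \<Rightarrow> real^'n"
    and f0 :: "real^'n \<Rightarrow> real^'n"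
    and g :: "real^'n \<Rightarrow> real^'m^'n"
    and phi :: "real \<Rightarrow> real^'n \<Rightarrow> real^'m \<Rightarrow> real^'n"
    and x :: "real^'n" and K :: "(real^'n) set" and U :: "(real^'m) set"
    and h L0 Lg rU :: real
  assumes f_affine: "\<And>y u. f y u = f0 y + g y *v u"
    and f0: "C2_bounds_on L0 K f0"
    and g: "C2_bounds_on Lg K g"
    and K: "convex K" "cball x 1 \<subseteq> K"
    and U: "convex U" "\<And>u. u \<in> U \<Longrightarrow> norm u \<le> rU"
    and flow_initial: "\<And>u. u \<in> U \<Longrightarrow> phi 0 x u = x"
    and flow_deriv: "\<And>u s. u \<in> U \<Longrightarrow> s \<in> {0..h} \<Longrightarrow>
      ((\<lambda>s. phi s x u) has_vector_derivative f (phi s x u) u) (at s within {0..h})"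
    and h: "0 \<le> h" "(L0 + Lg * rU) * h \<le> 1/2"
begin

lemma growth_rate_nonneg: "u \<in> U \<Longrightarrow> 0 \<le> L0 + Lg * rU"
  using C2_bounds_on_nonneg[OF f0] C2_bounds_on_nonneg[OF g] order_trans[OF norm_ge_zero U(2)]
  by simp

lemma vector_field_norm_le:
  assumes "y \<in> K" "u \<in> U"
  shows "norm (f y u) \<le> L0 + Lg * rU"
proof -
  have "norm (f0 y + g y *v u) \<le> L0 + Lg * rU"
    using assms C2_bounds_on_norm_le[OF f0] C2_bounds_on_norm_le[OF g] U(2)
    by (intro norm_triangle_le add_mono norm_matrix_vector_mult_bound) auto
  then show ?thesis
    by (simp add: f_affine)
qed

lemma flow_in_K:
  assumes "u \<in> U" "s \<in> {0..h}"
  shows "phi s x u \<in> K"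
proof -
  have "phi s x u \<in> cball (phi 0 x u) 1"
  proof (rule stays_in_cball_if_derivative_bounded[OF flow_deriv[OF \<open>u \<in> U\<close>]])
    show "norm (f (phi \<sigma> x u) u) \<le> L0 + Lg * rU" if "phi \<sigma> x u \<in> cball (phi 0 x u) 1" for \<sigma>
      using that K(2) flow_initial[OF \<open>u \<in> U\<close>] vector_field_norm_le \<open>u \<in> U\<close> by auto
  qed (use h assms in auto)
  then show ?thesis
    using K(2) flow_initial[OF \<open>u \<in> U\<close>] by auto
qed

lemma vector_field_lipschitz:
  assumes "y1 \<in> K" "y2 \<in> K" "u \<in> U" "v \<in> U"
  shows "norm (f y1 u - f y2 v) \<le> (L0 + Lg * rU) * norm (y1 - y2) + Lg * norm (u - v)"
proof -
  have "f y1 u - f y2 v = (f0 y1 - f0 y2) + (g y1 - g y2) *v u + g y2 *v (u - v)"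
    unfolding f_affine by (simp add: matrix_vector_mult_diff_rdistrib matrix_vector_mult_diff_distrib)
  also have "norm \<dots> \<le> L0 * norm (y1 - y2) + (Lg * norm (y1 - y2)) * rU + Lg * norm (u - v)"
  proof (intro norm_triangle_le add_mono)
    show "norm (f0 y1 - f0 y2) \<le> L0 * norm (y1 - y2)"
      using C2_bounds_on_lipschitz[OF f0] assms by simp
    show "norm ((g y1 - g y2) *v u) \<le> Lg * norm (y1 - y2) * rU"
      using C2_bounds_on_lipschitz[OF g] U(2) assms by (intro norm_matrix_vector_mult_bound) auto
    show "norm (g y2 *v (u - v)) \<le> Lg * norm (u - v)"
      using C2_bounds_on_norm_le[OF g] assms by (intro norm_matrix_vector_mult_bound) auto
  qed
  finally show ?thesis
    by (simp add: algebra_simps)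
qed

lemma flow_input_lipschitz:
  assumes "u \<in> U" "v \<in> U" "s \<in> {0..h}"
  shows "norm (phi s x u - phi s x v) \<le> 2 * Lg * h * norm (u - v)"
proof -
  have "norm (phi s x u - phi s x v) \<le> 2 * h * (Lg * norm (u - v))"
  proof (rule short_time_gronwall[where z' = "\<lambda>s. f (phi s x u) u - f (phi s x v) v"])
    show "((\<lambda>s. phi s x u - phi s x v) has_vector_derivative f (phi \<sigma> x u) u - f (phi \<sigma> x v) v)
        (at \<sigma> within {0..h})" if "\<sigma> \<in> {0..h}" for \<sigma>
      using flow_deriv assms that by (intro has_vector_derivative_diff) auto
    show "norm (f (phi \<sigma> x u) u - f (phi \<sigma> x v) v)
        \<le> (L0 + Lg * rU) * norm (phi \<sigma> x u - phi \<sigma> x v) + Lg * norm (u - v)" if "\<sigma> \<in> {0..h}" for \<sigma>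
      using vector_field_lipschitz flow_in_K assms that by simp
  qed (use assms h flow_initial growth_rate_nonneg in auto)
  then show ?thesis
    by (simp add: algebra_simps)
qed

lemma vector_field_convexity_defect:
  assumes "y1 \<in> K" "y2 \<in> K" "y \<in> K" "u \<in> U" "v \<in> U" "t \<in> {0..1}"
  shows "norm (f y ((1 - t) *\<^sub>R u + t *\<^sub>R v) - ((1 - t) *\<^sub>R f y1 u + t *\<^sub>R f y2 v))
    \<le> (L0 + Lg * rU) * norm (y - ((1 - t) *\<^sub>R y1 + t *\<^sub>R y2))
      + t * (1 - t) * ((L0 + Lg * rU) * (norm (y1 - y2))\<^sup>2 + Lg * norm (y1 - y2) * norm (u - v))"
proof -
  define w where "w = (1 - t) *\<^sub>R u + t *\<^sub>R v"
  define yb where "yb = (1 - t) *\<^sub>R y1 + t *\<^sub>R y2"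
  have "w \<in> U" "yb \<in> K"
    using assms U(1) K(1) by (auto simp: w_def yb_def intro: convexD)
  have "f y w - ((1 - t) *\<^sub>R f y1 u + t *\<^sub>R f y2 v)
      = (f0 y - f0 yb) + (f0 yb - ((1 - t) *\<^sub>R f0 y1 + t *\<^sub>R f0 y2)) + (g y - g yb) *v w
        + (g yb - ((1 - t) *\<^sub>R g y1 + t *\<^sub>R g y2)) *v w + (t * (1 - t)) *\<^sub>R ((g y2 - g y1) *v (u - v))"
    unfolding f_affine w_def
    by (simp add: matrix_vector_mult_diff_rdistrib matrix_vector_mult_add_rdistrib
        matrix_vector_right_distrib matrix_vector_mult_diff_distrib scaleR_matrix_vector_assoc
        matrix_vector_mult_scaleR algebra_simps)
  also have "norm \<dots> \<le> L0 * norm (y - yb) + L0 * t * (1 - t) * (norm (y2 - y1))\<^sup>2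
      + Lg * norm (y - yb) * rU + Lg * t * (1 - t) * (norm (y2 - y1))\<^sup>2 * rU
      + t * (1 - t) * (Lg * norm (y2 - y1) * norm (u - v))"
  proof (intro norm_triangle_le add_mono)
    show "norm (f0 y - f0 yb) \<le> L0 * norm (y - yb)"
      using C2_bounds_on_lipschitz[OF f0] assms \<open>yb \<in> K\<close> by simp
    show "norm (f0 yb - ((1 - t) *\<^sub>R f0 y1 + t *\<^sub>R f0 y2)) \<le> L0 * t * (1 - t) * (norm (y2 - y1))\<^sup>2"
      using C2_bounds_on_interpolation_defect[OF f0] assms by (simp add: yb_def)
    show "norm ((g y - g yb) *v w) \<le> Lg * norm (y - yb) * rU"
      using C2_bounds_on_lipschitz[OF g] U(2) assms \<open>w \<in> U\<close> \<open>yb \<in> K\<close>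
      by (intro norm_matrix_vector_mult_bound) auto
    show "norm ((g yb - ((1 - t) *\<^sub>R g y1 + t *\<^sub>R g y2)) *v w) \<le> Lg * t * (1 - t) * (norm (y2 - y1))\<^sup>2 * rU"
      using C2_bounds_on_interpolation_defect[OF g] U(2) assms \<open>w \<in> U\<close>
      by (intro norm_matrix_vector_mult_bound) (auto simp: yb_def)
    have "norm ((g y2 - g y1) *v (u - v)) \<le> Lg * norm (y2 - y1) * norm (u - v)"
      using C2_bounds_on_lipschitz[OF g] assms by (intro norm_matrix_vector_mult_bound) auto
    then show "norm ((t * (1 - t)) *\<^sub>R ((g y2 - g y1) *v (u - v)))
        \<le> t * (1 - t) * (Lg * norm (y2 - y1) * norm (u - v))"
      using assms(6) by (simp add: mult_left_mono)
  qed
  also have "\<dots> = (L0 + Lg * rU) * norm (y - yb)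
      + t * (1 - t) * ((L0 + Lg * rU) * (norm (y1 - y2))\<^sup>2 + Lg * norm (y1 - y2) * norm (u - v))"
    by (simp add: norm_minus_commute algebra_simps)
  finally show ?thesis
    by (simp add: w_def yb_def)
qed

lemma flow_convexity_defect:
  assumes "u \<in> U" "v \<in> U" "t \<in> {0..1}"
  shows "norm (phi h x ((1 - t) *\<^sub>R u + t *\<^sub>R v) - ((1 - t) *\<^sub>R phi h x u + t *\<^sub>R phi h x v))
    \<le> 8 * Lg\<^sup>2 * t * (1 - t) * h\<^sup>2 * (norm (u - v))\<^sup>2"
proof -
  define w where "w = (1 - t) *\<^sub>R u + t *\<^sub>R v"
  define A where "A = L0 + Lg * rU"
  define d where "d = norm (u - v)"
  define D where "D s = phi s x w - ((1 - t) *\<^sub>R phi s x u + t *\<^sub>R phi s x v)" for s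
  define C where "C = t * (1 - t) * h * d\<^sup>2 * (4 * Lg\<^sup>2 * A * h + 2 * Lg\<^sup>2)"
  have "w \<in> U"
    using assms U(1) by (auto simp: w_def intro: convexD)
  have A: "0 \<le> A" "A * h \<le> 1/2"
    using growth_rate_nonneg[OF \<open>u \<in> U\<close>] h by (simp_all add: A_def)
  have "norm (D h) \<le> 2 * h * C"
  proof (rule short_time_gronwall[OF _ _ _ A])
    show "(D has_vector_derivative f (phi s x w) w - ((1 - t) *\<^sub>R f (phi s x u) u + t *\<^sub>R f (phi s x v) v))
        (at s within {0..h})" if "s \<in> {0..h}" for s
      unfolding D_def using flow_deriv that assms \<open>w \<in> U\<close>
      by (auto intro!: derivative_eq_intros)
    show "D 0 = 0"
      using flow_initial assms \<open>w \<in> U\<close> by (simp add: D_def algebra_simps flip: scaleR_add_left)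
    show "norm (f (phi s x w) w - ((1 - t) *\<^sub>R f (phi s x u) u + t *\<^sub>R f (phi s x v) v))
        \<le> A * norm (D s) + C" if s: "s \<in> {0..h}" for s
    proof -
      define e where "e = norm (phi s x u - phi s x v)"
      have e: "e \<le> 2 * Lg * h * d"
        using flow_input_lipschitz assms s by (simp add: e_def d_def)
      have "A * e\<^sup>2 + Lg * e * d \<le> A * (2 * Lg * h * d)\<^sup>2 + Lg * (2 * Lg * h * d) * d"
        using e A C2_bounds_on_nonneg[OF g]
        by (intro add_mono mult_left_mono mult_right_mono power_mono) (auto simp: e_def d_def)
      also have "\<dots> = h * d\<^sup>2 * (4 * Lg\<^sup>2 * A * h + 2 * Lg\<^sup>2)"
        by (simp add: power2_eq_square algebra_simps)
      finally have "t * (1 - t) * (A * e\<^sup>2 + Lg * e * d) \<le> C"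
        using assms(3) by (simp add: C_def mult_left_mono mult.assoc)
      moreover have "norm (f (phi s x w) w - ((1 - t) *\<^sub>R f (phi s x u) u + t *\<^sub>R f (phi s x v) v))
          \<le> A * norm (D s) + t * (1 - t) * (A * e\<^sup>2 + Lg * e * d)"
        using vector_field_convexity_defect[OF flow_in_K[OF assms(1) s] flow_in_K[OF assms(2) s]
            flow_in_K[OF \<open>w \<in> U\<close> s] assms]
        by (simp add: A_def D_def e_def d_def w_def)
      ultimately show ?thesis
        by linarith
    qed
  qed (use h in auto)
  also have "2 * h * C \<le> 8 * Lg\<^sup>2 * t * (1 - t) * h\<^sup>2 * d\<^sup>2"
  proof -
    have "4 * Lg\<^sup>2 * A * h + 2 * Lg\<^sup>2 \<le> 4 * Lg\<^sup>2"
      using mult_left_mono[OF A(2), of "4 * Lg\<^sup>2"] by (simp add: mult.assoc)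
    then have "C \<le> t * (1 - t) * h * d\<^sup>2 * (4 * Lg\<^sup>2)"
      unfolding C_def using assms(3) h by (intro mult_left_mono) auto
    from mult_left_mono[OF this, of "2 * h"] show ?thesis
      using h by (simp add: power2_eq_square mult_ac)
  qed
  finally show ?thesis
    by (simp add: D_def w_def d_def)
qed

lemma convex_on_hamiltonian:
  assumes coercive: "\<And>z. lam * (norm z)\<^sup>2 \<le> z \<bullet> (R *v z)"
    and small: "8 * Lg\<^sup>2 * h * norm p \<le> lam"
  shows "convex_on U (\<lambda>u. hamiltonian phi Q R h x u p)"
proof (rule convex_onI[OF _ U(1)])
  fix t :: real and u v assume t: "0 < t" "t < 1" and uv: "u \<in> U" "v \<in> U"
  define \<Delta> where "\<Delta> = phi h x ((1 - t) *\<^sub>R u + t *\<^sub>R v) - ((1 - t) *\<^sub>R phi h x u + t *\<^sub>R phi h x v)"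
  have "\<Delta> \<bullet> p \<le> norm \<Delta> * norm p"
    by (rule norm_cauchy_schwarz)
  also have "\<dots> \<le> 8 * Lg\<^sup>2 * t * (1 - t) * h\<^sup>2 * (norm (u - v))\<^sup>2 * norm p"
    using flow_convexity_defect[OF uv] t by (simp add: \<Delta>_def mult_right_mono)
  also have "\<dots> = h * (t * (1 - t) * ((8 * Lg\<^sup>2 * h * norm p) * (norm (u - v))\<^sup>2))"
    by (simp add: power2_eq_square mult_ac)
  also have "\<dots> \<le> h * (t * (1 - t) * (lam * (norm (u - v))\<^sup>2))"
    using small t h by (intro mult_left_mono mult_right_mono) auto
  also have "\<dots> \<le> h * (t * (1 - t) * ((u - v) \<bullet> (R *v (u - v))))"
    using coercive t h by (intro mult_left_mono) auto
  finally show "hamiltonian phi Q R h x ((1 - t) *\<^sub>R u + t *\<^sub>R v) p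
      \<le> (1 - t) * hamiltonian phi Q R h x u p + t * hamiltonian phi Q R h x v p"
    unfolding hamiltonian_convex_combination \<Delta>_def by simp
qed

end

lemma small_step_sizes_exist:
  fixes A B lam hbar :: real
  assumes "0 < hbar" "0 \<le> A" "0 \<le> B" "0 < lam"
  obtains h0 where "0 < h0" "h0 \<le> hbar" "\<And>h. 0 \<le> h \<Longrightarrow> h \<le> h0 \<Longrightarrow> A * h \<le> 1/2 \<and> B * h \<le> lam"
proof
  define h0 where "h0 = min hbar (min (1 / (2 * A + 1)) (lam / (B + 1)))"
  show "0 < h0" "h0 \<le> hbar"
    using assms by (auto simp: h0_def)
  fix h :: real assume "0 \<le> h" "h \<le> h0"
  then have "h * (2 * A + 1) \<le> 1" "h * (B + 1) \<le> lam"
    using assms by (auto simp: h0_def field_simps)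
  then show "A * h \<le> 1/2 \<and> B * h \<le> lam"
    using \<open>0 \<le> h\<close> by (simp_all add: algebra_simps)
qed

theorem proposition3:
  fixes f :: "real^'n \<Rightarrow> real^'m \<Rightarrow> real^'n"
    and f0 :: "real^'n \<Rightarrow> real^'n"
    and g :: "real^'n \<Rightarrow> real^'m^'n"
    and phi :: "real \<Rightarrow> real^'n \<Rightarrow> real^'m \<Rightarrow> real^'n"
    and X P :: "(real^'n) set" and U :: "(real^'m) set"
    and Q :: "real^'n^'n" and R :: "real^'m^'m"
    and hbar :: real
  assumes f_smooth: "smooth_on UNIV (\<lambda>(x, u). f x u)"
    and f_zero: "f 0 0 = 0"
    and f_affine: "\<And>x u. f x u = f0 x + g x *v u"
    and f0_smooth: "smooth_on UNIV f0"
    and g_smooth: "smooth_on UNIV g"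
    and X: "bounded X" "open X" "0 \<in> X"
    and U: "bounded U" "open U" "0 \<in> U" "convex U"
    and P: "bounded P" "open P" "0 \<in> P"
    and hbar: "hbar > 0"
    and phi_sol: "\<And>x0 u0. x0 \<in> X \<Longrightarrow> u0 \<in> U \<Longrightarrow>
        phi 0 x0 u0 = x0 \<and>
        (\<forall>t\<in>{0..hbar}. ((\<lambda>s. phi s x0 u0) has_vector_derivative f (phi t x0 u0) u0)
                             (at t within {0..hbar}))"
    and phi_unique: "\<And>x0 u0 y. x0 \<in> X \<Longrightarrow> u0 \<in> U \<Longrightarrow> y 0 = x0 \<Longrightarrow>
        (\<forall>t\<in>{0..hbar}. (y has_vector_derivative f (y t) u0) (at t within {0..hbar})) \<Longrightarrow>
        \<forall>t\<in>{0..hbar}. y t = phi t x0 u0"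
    and phi_smooth: "smooth_on ({0<..<hbar} \<times> X \<times> U) (\<lambda>(t, x, u). phi t x u)"
    and Q: "psd_matrix Q"
    and R: "pd_matrix R"
  shows "\<exists>h0>0. h0 \<le> hbar \<and>
           (\<forall>h. 0 < h \<and> h \<le> h0 \<longrightarrow>
              (\<forall>x\<in>X. \<forall>p\<in>P. convex_on U (\<lambda>u. hamiltonian phi Q R h x u p)))"
proof -
  obtain rX rU rP where rX: "\<And>x. x \<in> X \<Longrightarrow> norm x \<le> rX"
    and rU: "\<And>u. u \<in> U \<Longrightarrow> norm u \<le> rU" and rP: "\<And>p. p \<in> P \<Longrightarrow> norm p \<le> rP"
    using X(1) U(1) P(1) by (meson bounded_iff)
  define K where "K = cball (0::real^'n) (rX + 1)"
  have K: "compact K" "convex K"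
    by (simp_all add: K_def)
  obtain L0 where L0: "C2_bounds_on L0 K f0"
    using smooth_on_UNIV_imp_C2_bounds_on[OF f0_smooth K] .
  obtain Lg where Lg: "C2_bounds_on Lg K g"
    using smooth_on_UNIV_imp_C2_bounds_on[OF g_smooth K] .
  obtain lam where lam: "0 < lam" "\<And>z. lam * (norm z)\<^sup>2 \<le> z \<bullet> (R *v z)"
    using pd_matrix_coercive[OF R] by blast
  have "0 \<le> L0 + Lg * rU" "0 \<le> 8 * Lg\<^sup>2 * rP"
    using C2_bounds_on_nonneg[OF L0] C2_bounds_on_nonneg[OF Lg] rU[OF U(3)] rP[OF P(3)] by auto
  then obtain h0 where h0: "0 < h0" "h0 \<le> hbar"
    and small: "\<And>h. 0 \<le> h \<Longrightarrow> h \<le> h0 \<Longrightarrow> (L0 + Lg * rU) * h \<le> 1/2 \<and> 8 * Lg\<^sup>2 * rP * h \<le> lam"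
    using small_step_sizes_exist[OF hbar _ _ lam(1)] by metis
  have "convex_on U (\<lambda>u. hamiltonian phi Q R h x u p)" if "0 < h" "h \<le> h0" "x \<in> X" "p \<in> P" for h x p
  proof -
    interpret affine_input_flow f f0 g phi x K U h L0 Lg rU
    proof
      show "cball x 1 \<subseteq> K"
        using rX[OF \<open>x \<in> X\<close>] by (simp add: K_def cball_subset_cball_iff dist_norm)
      show "((\<lambda>s. phi s x u) has_vector_derivative f (phi s x u) u) (at s within {0..h})"
        if "u \<in> U" "s \<in> {0..h}" for u s
      proof (rule has_vector_derivative_within_subset)
        show "((\<lambda>s. phi s x u) has_vector_derivative f (phi s x u) u) (at s within {0..hbar})"
          using phi_sol[OF \<open>x \<in> X\<close> \<open>u \<in> U\<close>] that h0 \<open>h \<le> h0\<close> by auto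
      qed (use h0 \<open>h \<le> h0\<close> in auto)
    qed (use f_affine L0 Lg K U rU phi_sol[OF \<open>x \<in> X\<close>] small[of h] that in auto)
    have "8 * Lg\<^sup>2 * h * norm p \<le> 8 * Lg\<^sup>2 * rP * h"
      using rP[OF \<open>p \<in> P\<close>] \<open>0 < h\<close> by (simp add: mult_left_mono mult_right_mono mult_ac)
    then show ?thesis
      using convex_on_hamiltonian[OF lam(2)] small[of h] that by auto
  qed
  then show ?thesis
    using h0 by blast
qed

end
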